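(* For $x>0$, $$\big[\ln\partial_x + \ln(2\sqrt{x})\big]\, I_0(\sqrt{x}) = K_0(\sqrt{x}),$$ where $I_0$ is the modified Bessel function of the first kind of order $0$, $K_0$ is the Macdonald function (modified Bessel function of the second kind) of order $0$, $\ln(2\sqrt x)$ acts by multiplication, and $\ln\partial_x$ is applied to $I_0(\sqrt{x})=\sum_{k\ge0}\frac{x^k}{4^k (k!)^2}$ term by term as described in the context.
   Context: For real $\nu$, $x>0$ and $\mu\ge 0$, the fractional derivative of a power is defined by $\partial_x^\nu x^\mu = \frac{\Gamma(\mu+1)}{\Gamma(\mu-\nu+1)}\,x^{\mu-\nu}$. The logarithm of the derivative operator is defined on powers by $(\ln\partial_x)\,x^\mu := \lim_{\nu\to 0}\frac{\partial_x^\nu x^\mu - x^\mu}{\nu}$, and on a power series $\sum_n c_n x^n$ it is defined termwise: $(\ln\partial_x)\sum_n c_nx^n := \sum_n c_n (\ln\partial_x)x^n$. *)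

theory Defs
  imports "HOL-Analysis.Analysis"
begin

definition frac_deriv_pow :: "real \<Rightarrow> real \<Rightarrow> real \<Rightarrow> real" where
  "frac_deriv_pow \<nu> \<mu> x = Gamma (\<mu> + 1) / Gamma (\<mu> - \<nu> + 1) * x powr (\<mu> - \<nu>)"

definition log_deriv_pow :: "real \<Rightarrow> real \<Rightarrow> real" where
  "log_deriv_pow \<mu> x = Lim (at 0) (\<lambda>\<nu>. (frac_deriv_pow \<nu> \<mu> x - x powr \<mu>) / \<nu>)"

definition log_deriv_series :: "(nat \<Rightarrow> real) \<Rightarrow> real \<Rightarrow> real" where
  "log_deriv_series c x = (\<Sum>n. c n * log_deriv_pow (real n) x)"

definition besselI :: "real \<Rightarrow> real \<Rightarrow> real" where
  "besselI \<nu> z = (\<Sum>k. (z / 2) powr (2 * real k + \<nu>) * rGamma (real k + \<nu> + 1) / fact k)"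

definition besselK0 :: "real \<Rightarrow> real" where
  "besselK0 z = Lim (at 0) (\<lambda>\<nu>. (pi / 2) * (besselI (- \<nu>) z - besselI \<nu> z) / sin (\<nu> * pi))"

end

theory Submission
  imports Defs
begin

text \<open>For a monomial, the limit defining \<open>ln \<partial>\<^sub>x\<close> is the \<open>\<nu>\<close>-derivative at \<open>0\<close> of
  \<open>\<Gamma>(n+1)/\<Gamma>(n-\<nu>+1) x\<^sup>n\<^sup>-\<^sup>\<nu>\<close>, namely \<open>x\<^sup>n (\<psi>(n+1) - ln x)\<close>. On the other side
  \<open>K\<^sub>0(z) = -\<partial>\<^sub>\<nu> I\<^sub>\<nu>(z)\<close> at \<open>\<nu> = 0\<close> by l'Hospital, and the \<open>\<nu>\<close>-derivative of the series of
  \<open>I\<^sub>\<nu>\<close> may be taken termwise because the differentiated series converges locally uniformly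
  in \<open>\<nu>\<close> (Weierstrass M-test). This gives \<open>K\<^sub>0(z) = \<Sum>\<^sub>k (\<psi>(k+1) - ln(z/2)) (z/2)\<^sup>2\<^sup>k/(k!)\<^sup>2\<close>, and with
  \<open>z = \<surd>x\<close> the two series differ exactly by \<open>ln x - ln(\<surd>x/2) = ln(2\<surd>x)\<close> times \<open>I\<^sub>0(\<surd>x)\<close>.\<close>

lemma rGamma_of_nat_plus_1: "rGamma (real n + 1) = 1 / fact n"
  using Gamma_fact[of n, where 'a=real] by (simp add: rGamma_inverse_Gamma add.commute divide_inverse)

lemma log_deriv_pow_of_nat:
  assumes x: "x > 0"
  shows "log_deriv_pow (real n) x = x ^ n * (Digamma (real n + 1) - ln x)"
proof -
  define \<phi> where "\<phi> \<nu> = fact n * rGamma (real n - \<nu> + 1) * x powr (real n - \<nu>)" for \<nu>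
  have frac_deriv: "frac_deriv_pow \<nu> (real n) x = \<phi> \<nu>" for \<nu>
    using Gamma_fact[of n, where 'a=real]
    by (simp add: frac_deriv_pow_def \<phi>_def Gamma_def divide_inverse add.commute)
  have not_pole: "real n - 0 + 1 \<notin> \<int>\<^sub>\<le>\<^sub>0"
    using of_nat_in_nonpos_Ints_iff[of "Suc n"] by (simp add: add.commute)
  have "(\<phi> has_real_derivative fact n * (- rGamma (real n - 0 + 1) * Digamma (real n - 0 + 1) * (0 - 1 + 0))
      * x powr (real n - 0) + fact n * rGamma (real n - 0 + 1)
      * (x powr (real n - 0) * ((0 - 1) * ln x / 1 + 0 * (real n - 0) / x))) (at 0)"
    unfolding \<phi>_def using x not_pole by (intro derivative_eq_intros refl) auto
  then have "(\<phi> has_real_derivative x ^ n * (Digamma (real n + 1) - ln x)) (at 0)"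
    using x rGamma_of_nat_plus_1[of n] by (simp add: powr_realpow algebra_simps)
  moreover have "\<phi> 0 = x powr real n"
    by (simp add: \<phi>_def rGamma_of_nat_plus_1)
  ultimately have "((\<lambda>\<nu>. (\<phi> \<nu> - x powr real n) / \<nu>) \<longlongrightarrow> x ^ n * (Digamma (real n + 1) - ln x)) (at 0)"
    unfolding DERIV_def by simp
  then show ?thesis
    unfolding log_deriv_pow_def frac_deriv by (intro tendsto_Lim) auto
qed

lemma pochhammer_ge_power:
  fixes a c :: real
  assumes "0 \<le> c" "c \<le> a"
  shows "c ^ k \<le> pochhammer a k"
proof -
  have "c ^ k = (\<Prod>i<k. c)" by simp
  also have "\<dots> \<le> (\<Prod>i<k. a + real i)"
    using assms by (intro prod_mono) auto
  finally show ?thesis by (simp add: pochhammer_prod lessThan_atLeast0)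
qed

lemma abs_rGamma_plus_of_nat_le:
  fixes a c :: real
  assumes "0 < c" "c \<le> a"
  shows "\<bar>rGamma (a + real k)\<bar> \<le> \<bar>rGamma a\<bar> / c ^ k"
proof -
  have c_pow: "0 < c ^ k" "c ^ k \<le> pochhammer a k"
    using assms pochhammer_ge_power[of c a k] by auto
  have "\<bar>rGamma (a + real k)\<bar> = \<bar>rGamma a\<bar> / pochhammer a k"
    using pochhammer_rGamma[of a k] c_pow by (simp add: abs_mult field_simps)
  also have "\<dots> \<le> \<bar>rGamma a\<bar> / c ^ k"
    using c_pow by (intro divide_left_mono) auto
  finally show ?thesis .
qed

lemma abs_Digamma_plus_of_nat_le:
  fixes a c :: real
  assumes "0 < c" "c \<le> a"
  shows "\<bar>Digamma (a + real k)\<bar> \<le> \<bar>Digamma a\<bar> + real k / c"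
proof -
  have "Digamma (a + real k) = Digamma a + (\<Sum>i<k. 1 / (a + real i))"
    using assms Polygamma_plus_of_nat[of k a 0] by force
  moreover have "\<bar>\<Sum>i<k. 1 / (a + real i)\<bar> \<le> (\<Sum>i<k. 1 / c)"
    using assms by (intro order.trans[OF sum_abs] sum_mono) (auto simp: field_simps)
  ultimately show ?thesis by simp
qed

lemma summable_mult_power_div_fact: "summable (\<lambda>k. C * q ^ k / fact k :: real)"
  using summable_mult[OF summable_exp[of q], of C] by (simp add: field_simps)

definition besselI_term :: "real \<Rightarrow> real \<Rightarrow> nat \<Rightarrow> real" where
  "besselI_term \<nu> z k = (z / 2) powr (2 * real k + \<nu>) * rGamma (real k + \<nu> + 1) / fact k"

lemma besselI_eq_suminf: "besselI \<nu> z = (\<Sum>k. besselI_term \<nu> z k)"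
  by (simp add: besselI_def besselI_term_def)

lemma besselI_term_has_real_derivative:
  assumes z: "z > 0" and \<nu>: "\<nu> > -1"
  shows "((\<lambda>\<mu>. besselI_term \<mu> z k) has_real_derivative
           (ln (z / 2) - Digamma (real k + \<nu> + 1)) * besselI_term \<nu> z k) (at \<nu>)"
proof -
  have not_pole: "real k + \<nu> + 1 \<notin> \<int>\<^sub>\<le>\<^sub>0"
    using \<nu> nonpos_Ints_nonpos by fastforce
  have "((\<lambda>\<mu>. besselI_term \<mu> z k) has_real_derivative
      ((z / 2) powr (2 * real k + \<nu>) * ((0 + 1) * ln (z / 2) + (2 * real k + \<nu>) * 0 / (z / 2))
        * rGamma (real k + \<nu> + 1)
      + (z / 2) powr (2 * real k + \<nu>) * (- rGamma (real k + \<nu> + 1) * Digamma (real k + \<nu> + 1) * (0 + 1 + 0)))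
      / fact k) (at \<nu>)"
    unfolding besselI_term_def using z not_pole by (intro derivative_eq_intros refl) auto
  then show ?thesis
    by (simp add: besselI_term_def algebra_simps add_divide_distrib diff_divide_distrib)
qed

lemma abs_besselI_term_le:
  assumes z: "z > 0" and c: "0 < c" "c \<le> \<nu> + 1"
  shows "\<bar>besselI_term \<nu> z k\<bar> \<le> (z / 2) powr \<nu> * \<bar>rGamma (\<nu> + 1)\<bar> * ((z / 2)\<^sup>2 / c) ^ k / fact k"
proof -
  have "(z / 2) powr (2 * real k + \<nu>) = ((z / 2)\<^sup>2) ^ k * (z / 2) powr \<nu>"
    using z powr_realpow[of "z / 2" "2 * k"] by (simp add: powr_add power_mult)
  then have "\<bar>besselI_term \<nu> z k\<bar>
      = ((z / 2)\<^sup>2) ^ k * (z / 2) powr \<nu> * \<bar>rGamma (real k + \<nu> + 1)\<bar> / fact k"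
    by (simp add: besselI_term_def abs_mult)
  also have "\<dots> \<le> ((z / 2)\<^sup>2) ^ k * (z / 2) powr \<nu> * (\<bar>rGamma (\<nu> + 1)\<bar> / c ^ k) / fact k"
    using abs_rGamma_plus_of_nat_le[OF c, of k] by (intro divide_right_mono mult_left_mono) (auto simp: add_ac)
  also have "\<dots> = (z / 2) powr \<nu> * \<bar>rGamma (\<nu> + 1)\<bar> * ((z / 2)\<^sup>2 / c) ^ k / fact k"
    by (simp add: power_divide)
  finally show ?thesis .
qed

lemma abs_besselI_term_deriv_le:
  assumes z: "z > 0" and c: "0 < c" "c \<le> \<nu> + 1"
  shows "\<bar>(ln (z / 2) - Digamma (real k + \<nu> + 1)) * besselI_term \<nu> z k\<bar>
    \<le> (\<bar>ln (z / 2)\<bar> + \<bar>Digamma (\<nu> + 1)\<bar> + 1 / c) * (z / 2) powr \<nu> * \<bar>rGamma (\<nu> + 1)\<bar>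
        * (2 * (z / 2)\<^sup>2 / c) ^ k / fact k"
proof -
  define B where "B = \<bar>ln (z / 2)\<bar> + \<bar>Digamma (\<nu> + 1)\<bar> + 1 / c"
  \<comment> \<open>The crude bound \<open>k \<le> 2\<^sup>k\<close> keeps the majorant of the form \<open>C q\<^sup>k / k!\<close>.\<close>
  have "real k \<le> 2 ^ k"
    using less_exp[of k] by (simp add: order.strict_implies_order flip: of_nat_less_iff)
  then have "real k / c \<le> 2 ^ k / c"
    using c by (simp add: divide_right_mono)
  moreover have "\<bar>ln (z / 2)\<bar> + \<bar>Digamma (\<nu> + 1)\<bar> \<le> (\<bar>ln (z / 2)\<bar> + \<bar>Digamma (\<nu> + 1)\<bar>) * 2 ^ k"
    using mult_left_mono[of 1 "2 ^ k" "\<bar>ln (z / 2)\<bar> + \<bar>Digamma (\<nu> + 1)\<bar>"] by simp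
  moreover have "\<bar>Digamma (real k + \<nu> + 1)\<bar> \<le> \<bar>Digamma (\<nu> + 1)\<bar> + real k / c"
    using abs_Digamma_plus_of_nat_le[OF c, of k] by (simp add: add_ac)
  ultimately have "\<bar>ln (z / 2) - Digamma (real k + \<nu> + 1)\<bar> \<le> B * 2 ^ k"
    by (simp add: B_def distrib_right)
  then have "\<bar>(ln (z / 2) - Digamma (real k + \<nu> + 1)) * besselI_term \<nu> z k\<bar>
      \<le> B * 2 ^ k * ((z / 2) powr \<nu> * \<bar>rGamma (\<nu> + 1)\<bar> * ((z / 2)\<^sup>2 / c) ^ k / fact k)"
    unfolding abs_mult by (intro mult_mono abs_besselI_term_le z c) (auto simp: B_def)
  moreover have "(2 * (z / 2)\<^sup>2 / c) ^ k = 2 ^ k * ((z / 2)\<^sup>2 / c) ^ k"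
    by (metis power_mult_distrib times_divide_eq_right)
  ultimately show ?thesis
    by (simp add: B_def mult_ac)
qed

lemma summable_besselI_term:
  assumes "z > 0" "\<nu> > -1"
  shows "summable (besselI_term \<nu> z)"
  using assms abs_besselI_term_le[of z "\<nu> + 1" \<nu>]
  by (intro summable_comparison_test[OF _ summable_mult_power_div_fact]) auto

lemma summable_besselI_term_deriv:
  assumes "z > 0" "\<nu> > -1"
  shows "summable (\<lambda>k. (ln (z / 2) - Digamma (real k + \<nu> + 1)) * besselI_term \<nu> z k)"
  using assms abs_besselI_term_deriv_le[of z "\<nu> + 1" \<nu>]
  by (intro summable_comparison_test[OF _ summable_mult_power_div_fact]) auto

lemma besselI_has_real_derivative_order:
  assumes z: "z > 0" and \<nu>: "\<nu> > -1"
  shows "((\<lambda>\<mu>. besselI \<mu> z) has_real_derivative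
           (\<Sum>k. (ln (z / 2) - Digamma (real k + \<nu> + 1)) * besselI_term \<nu> z k)) (at \<nu>)"
proof -
  define c where "c = (\<nu> + 1) / 2"
  define S where "S = {\<nu> - c .. \<nu> + c}"
  have c: "c > 0" using \<nu> by (simp add: c_def)
  have S_lower: "c \<le> \<mu> + 1" if "\<mu> \<in> S" for \<mu>
    using that by (auto simp: S_def c_def field_simps)
  have compact_S: "compact S"
    by (simp add: S_def)
  have "continuous_on S (\<lambda>\<mu>. (z / 2) powr \<mu>)"
    using z by (intro continuous_intros) auto
  then obtain Cp where Cp: "Cp \<ge> 0" "\<And>\<mu>. \<mu> \<in> S \<Longrightarrow> norm ((z / 2) powr \<mu>) \<le> Cp"
    using continuous_on_compact_bound[OF compact_S] by blast
  have "continuous_on S (\<lambda>\<mu>. rGamma (\<mu> + 1))"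
    by (intro continuous_at_imp_continuous_on ballI isCont_rGamma continuous_intros)
  then obtain Cr where Cr: "Cr \<ge> 0" "\<And>\<mu>. \<mu> \<in> S \<Longrightarrow> norm (rGamma (\<mu> + 1)) \<le> Cr"
    using continuous_on_compact_bound[OF compact_S] by blast
  have "continuous_on S (\<lambda>\<mu>. Digamma (\<mu> + 1))"
  proof (intro continuous_at_imp_continuous_on ballI isCont_Polygamma continuous_intros)
    fix \<mu> assume "\<mu> \<in> S"
    then show "\<mu> + 1 \<notin> \<int>\<^sub>\<le>\<^sub>0"
      using S_lower c nonpos_Ints_nonpos by fastforce
  qed
  then obtain Cd where Cd: "Cd \<ge> 0" "\<And>\<mu>. \<mu> \<in> S \<Longrightarrow> norm (Digamma (\<mu> + 1)) \<le> Cd"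
    using continuous_on_compact_bound[OF compact_S] by blast
  define M where "M k = (\<bar>ln (z / 2)\<bar> + Cd + 1 / c) * Cp * Cr * (2 * (z / 2)\<^sup>2 / c) ^ k / fact k" for k
  have deriv_bound: "\<bar>(ln (z / 2) - Digamma (real k + \<mu> + 1)) * besselI_term \<mu> z k\<bar> \<le> M k"
    if \<mu>: "\<mu> \<in> S" for k \<mu>
  proof -
    have "\<bar>(ln (z / 2) - Digamma (real k + \<mu> + 1)) * besselI_term \<mu> z k\<bar>
      \<le> (\<bar>ln (z / 2)\<bar> + \<bar>Digamma (\<mu> + 1)\<bar> + 1 / c) * (z / 2) powr \<mu> * \<bar>rGamma (\<mu> + 1)\<bar>
          * (2 * (z / 2)\<^sup>2 / c) ^ k / fact k"
      using abs_besselI_term_deriv_le[OF z c S_lower[OF \<mu>]] .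
    also have "\<dots> \<le> M k"
      unfolding M_def using Cp(1) Cr(1) Cd(1) Cp(2)[OF \<mu>] Cr(2)[OF \<mu>] Cd(2)[OF \<mu>] c
      by (intro divide_right_mono mult_mono add_mono order.refl) auto
    finally show ?thesis .
  qed
  have "uniformly_convergent_on S
      (\<lambda>n \<mu>. \<Sum>k<n. (ln (z / 2) - Digamma (real k + \<mu> + 1)) * besselI_term \<mu> z k)"
    unfolding uniformly_convergent_on_def
    by (rule exI, rule Weierstrass_m_test[OF _ summable_mult_power_div_fact])
       (use deriv_bound in \<open>simp add: M_def\<close>)
  moreover have "((\<lambda>\<mu>. besselI_term \<mu> z k) has_real_derivative
      (ln (z / 2) - Digamma (real k + \<mu> + 1)) * besselI_term \<mu> z k) (at \<mu> within S)"
    if "\<mu> \<in> S" for k \<mu>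
    using S_lower[OF that] c
    by (intro has_field_derivative_at_within[OF besselI_term_has_real_derivative[OF z]]) auto
  moreover have "\<nu> \<in> interior S"
    using c by (simp add: S_def)
  ultimately show ?thesis
    unfolding besselI_eq_suminf using summable_besselI_term[OF z \<nu>] c
    by (intro has_field_derivative_series'(2)[of S _ _ \<nu>]) (auto simp: S_def)
qed

lemma odd_difference_over_sin_tendsto:
  fixes g :: "real \<Rightarrow> real"
  assumes "(g has_real_derivative D) (at 0)"
  shows "((\<lambda>\<nu>. (pi / 2) * (g (- \<nu>) - g \<nu>) / sin (\<nu> * pi)) \<longlongrightarrow> - D) (at 0)"
proof -
  have "((\<lambda>\<nu>. g (- \<nu>)) has_real_derivative D * (- 1)) (at 0)"
    using assms by (intro DERIV_chain2[where g=uminus]) (auto intro!: derivative_eq_intros)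
  then have "((\<lambda>\<nu>. g (- \<nu>) - g \<nu>) has_real_derivative D * (- 1) - D) (at 0)"
    using assms by (rule DERIV_diff)
  then have odd_part: "((\<lambda>\<nu>. (g (- \<nu>) - g \<nu>) / \<nu>) \<longlongrightarrow> - 2 * D) (at 0)"
    unfolding DERIV_def by simp
  have "((\<lambda>\<nu>. sin (\<nu> * pi)) has_real_derivative cos (0 * pi) * (1 * pi)) (at 0)"
    by (auto intro!: derivative_eq_intros)
  then have sin_part: "((\<lambda>\<nu>. sin (\<nu> * pi) / \<nu>) \<longlongrightarrow> pi) (at 0)"
    unfolding DERIV_def by simp
  have "((\<lambda>\<nu>. (pi / 2) * (((g (- \<nu>) - g \<nu>) / \<nu>) / (sin (\<nu> * pi) / \<nu>)))
      \<longlongrightarrow> (pi / 2) * (- 2 * D / pi)) (at 0)"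
    by (intro tendsto_intros odd_part sin_part) simp
  then have lim: "((\<lambda>\<nu>. (pi / 2) * (((g (- \<nu>) - g \<nu>) / \<nu>) / (sin (\<nu> * pi) / \<nu>))) \<longlongrightarrow> - D) (at 0)"
    by simp
  have ev: "\<forall>\<^sub>F \<nu> in at 0. (pi / 2) * (((g (- \<nu>) - g \<nu>) / \<nu>) / (sin (\<nu> * pi) / \<nu>))
      = (pi / 2) * (g (- \<nu>) - g \<nu>) / sin (\<nu> * pi)"
    unfolding eventually_at_filter by auto
  show ?thesis
    using lim by (rule tendsto_cong[OF ev, THEN iffD1])
qed

lemma besselK0_eq_neg_deriv:
  assumes "((\<lambda>\<nu>. besselI \<nu> z) has_real_derivative D) (at 0)"
  shows "besselK0 z = - D"
  unfolding besselK0_def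
  using odd_difference_over_sin_tendsto[OF assms] by (intro tendsto_Lim) simp_all

lemma besselI_term_zero_sqrt:
  assumes "x > 0"
  shows "besselI_term 0 (sqrt x) k = 1 / (4 ^ k * (fact k)\<^sup>2) * x ^ k"
proof -
  have "(sqrt x / 2) powr (2 * real k) = (x / 4) ^ k"
    using assms powr_realpow[of "sqrt x / 2" "2 * k"] by (simp add: power_mult power_divide)
  then show ?thesis
    using rGamma_of_nat_plus_1[of k] by (simp add: besselI_term_def power_divide power2_eq_square)
qed

theorem mainTheorem4:
  fixes x :: real
  assumes "x > 0"
  shows "summable (\<lambda>n. (1 / (4 ^ n * (fact n)\<^sup>2)) * log_deriv_pow (real n) x)
    \<and> log_deriv_series (\<lambda>n. 1 / (4 ^ n * (fact n)\<^sup>2)) x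
        + ln (2 * sqrt x) * besselI 0 (sqrt x) = besselK0 (sqrt x)"
proof -
  define z where "z = sqrt x"
  have z: "z > 0"
    using assms by (simp add: z_def)
  define e where "e = besselI_term 0 z"
  define w where "w = (\<lambda>k. (ln (z / 2) - Digamma (real k + 1)) * e k)"
  have I0: "e sums besselI 0 z"
    using summable_besselI_term[OF z, of 0] by (simp add: e_def besselI_eq_suminf summable_sums)
  have "w sums (- besselK0 z)"
    using summable_besselI_term_deriv[OF z, of 0]
      besselK0_eq_neg_deriv[OF besselI_has_real_derivative_order[OF z, of 0]]
    by (simp add: w_def e_def summable_sums)
  then have K0: "(\<lambda>k. - w k) sums besselK0 z"
    using sums_minus by fastforce
  have "(\<lambda>k. - w k - ln (2 * z) * e k) sums (besselK0 z - ln (2 * z) * besselI 0 z)"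
    using K0 I0 by (intro sums_diff sums_mult)
  moreover have "1 / (4 ^ k * (fact k)\<^sup>2) * log_deriv_pow (real k) x = - w k - ln (2 * z) * e k" for k
  proof -
    have "ln x = 2 * ln z"
      using assms by (simp add: z_def ln_sqrt)
    then show ?thesis
      using assms z besselI_term_zero_sqrt[OF assms, of k]
      by (simp add: log_deriv_pow_of_nat w_def e_def z_def ln_div ln_mult algebra_simps add_divide_distrib)
  qed
  ultimately show ?thesis
    unfolding log_deriv_series_def z_def[symmetric] by (simp add: sums_iff)
qed

end
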